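(* Let $\rho$ be a function quasi-norm over a $\sigma$-finite measure space $(\Omega,\Sigma,\mu)$. Then $\rho$ is locally dominating if and only if $L_\rho^d=L_\rho^b$. Moreover, if $\rho$ is dominating, then $\rho$ is minimal.
   Context: $L_0^+(\mu)$ / $L_0(\mu)$: measurable functions $\Omega\to[0,\infty]$ / $\Omega\to\mathbb{F}$ modulo a.e. equality. A function quasi-norm is $\rho\colon L_0^+(\mu)\to[0,\infty]$ with (F1) $\rho(tf)=t\rho(f)$, $t\ge0$; (F2) $f\le g$ a.e. $\Rightarrow\rho(f)\le\rho(g)$; (F3) $\rho(\chi_E)<\infty$ if $\mu(E)<\infty$; (F4) for all $E$ with $\mu(E)<\infty$ and $\varepsilon>0$ there is $\delta>0$ with $\mu(A)\le\varepsilon$ whenever $A\subseteq E$ measurable and $\rho(\chi_A)\le\delta$; (F5) $\rho(f+g)\le\kappa(\rho(f)+\rho(g))$. $L_\rho=\{f\in L_0(\mu):\rho(|f|)<\infty\}$ quasi-normed by $\rho(|f|)$. $g\in L_0^+(\mu)$ with $\rho(g)<\infty$ is dominating if $\lim_n\rho(g_n)=0$ for every non-increasing $(g_n)$ in $L_0^+(\mu)$ with $g_1\le g$ and $\lim g_n=0$. $L_\rho^d=\{f\in L_\rho:|f|\text{ dominating}\}$; $\rho$ is dominating if $L_\rho^d=L_\rho$, and locally dominating if $\chi_E$ is dominating for every $E$ with $\mu(E)<\infty$. $L_\rho^b$ is the closure in $L_\rho$ of $\operatorname{span}\{\chi_E:\mu(E)<\infty\}$; $\rho$ is minimal if $L_\rho^b=L_\rho$.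 *)

theory Defs
  imports "HOL-Analysis.Analysis"
begin

text \<open>Elements of L_0^+(mu) are represented by measurable functions into ennreal;
  rho is only ever applied to measurable functions. Axiom (F2) makes rho
  invariant under a.e. equality, so working with representatives is harmless.\<close>

definition function_quasi_norm :: "'a measure \<Rightarrow> (('a \<Rightarrow> ennreal) \<Rightarrow> ennreal) \<Rightarrow> bool" where
  "function_quasi_norm M \<rho> \<longleftrightarrow>
     (\<forall>f\<in>borel_measurable M. \<forall>t::real. t \<ge> 0 \<longrightarrow> \<rho> (\<lambda>x. ennreal t * f x) = ennreal t * \<rho> f) \<and>
     (\<forall>f\<in>borel_measurable M. \<forall>g\<in>borel_measurable M.
        (AE x in M. f x \<le> g x) \<longrightarrow> \<rho> f \<le> \<rho> g) \<and>
     (\<forall>E\<in>sets M. emeasure M E < \<infinity> \<longrightarrow> \<rho> (indicator E) < \<infinity>) \<and>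
     (\<forall>E\<in>sets M. emeasure M E < \<infinity> \<longrightarrow>
        (\<forall>\<epsilon>::real. \<epsilon> > 0 \<longrightarrow> (\<exists>\<delta>::real. \<delta> > 0 \<and>
           (\<forall>A\<in>sets M. A \<subseteq> E \<longrightarrow> \<rho> (indicator A) \<le> ennreal \<delta> \<longrightarrow> emeasure M A \<le> ennreal \<epsilon>)))) \<and>
     (\<exists>\<kappa>::real. \<forall>f\<in>borel_measurable M. \<forall>g\<in>borel_measurable M.
        \<rho> (\<lambda>x. f x + g x) \<le> ennreal \<kappa> * (\<rho> f + \<rho> g))"

definition Lrho :: "'a measure \<Rightarrow> (('a \<Rightarrow> ennreal) \<Rightarrow> ennreal) \<Rightarrow> ('a \<Rightarrow> 'f::real_normed_field) set" where
  "Lrho M \<rho> = {f. f \<in> borel_measurable M \<and> \<rho> (\<lambda>x. ennreal (norm (f x))) < \<infinity>}"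

definition dominating_fun :: "'a measure \<Rightarrow> (('a \<Rightarrow> ennreal) \<Rightarrow> ennreal) \<Rightarrow> ('a \<Rightarrow> ennreal) \<Rightarrow> bool" where
  "dominating_fun M \<rho> g \<longleftrightarrow> g \<in> borel_measurable M \<and> \<rho> g < \<infinity> \<and>
     (\<forall>gs :: nat \<Rightarrow> 'a \<Rightarrow> ennreal.
        (\<forall>n. gs n \<in> borel_measurable M) \<longrightarrow>
        (\<forall>n. AE x in M. gs (Suc n) x \<le> gs n x) \<longrightarrow>
        (AE x in M. gs 0 x \<le> g x) \<longrightarrow>
        (AE x in M. (\<lambda>n. gs n x) \<longlonglongrightarrow> 0) \<longrightarrow>
        (\<lambda>n. \<rho> (gs n)) \<longlonglongrightarrow> 0)"

definition Ld :: "'a measure \<Rightarrow> (('a \<Rightarrow> ennreal) \<Rightarrow> ennreal) \<Rightarrow> ('a \<Rightarrow> 'f::real_normed_field) set" where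
  "Ld M \<rho> = {f \<in> Lrho M \<rho>. dominating_fun M \<rho> (\<lambda>x. ennreal (norm (f x)))}"

definition dominating_qn :: "'a measure \<Rightarrow> (('a \<Rightarrow> ennreal) \<Rightarrow> ennreal) \<Rightarrow> 'f::real_normed_field itself \<Rightarrow> bool" where
  "dominating_qn M \<rho> _ \<longleftrightarrow> (Ld M \<rho> :: ('a \<Rightarrow> 'f) set) = Lrho M \<rho>"

definition locally_dominating :: "'a measure \<Rightarrow> (('a \<Rightarrow> ennreal) \<Rightarrow> ennreal) \<Rightarrow> bool" where
  "locally_dominating M \<rho> \<longleftrightarrow>
     (\<forall>E\<in>sets M. emeasure M E < \<infinity> \<longrightarrow> dominating_fun M \<rho> (indicator E))"

definition simple_span :: "'a measure \<Rightarrow> ('a \<Rightarrow> 'f::real_normed_field) set" where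
  "simple_span M = {(\<lambda>x. \<Sum>i<n. (c i :: 'f) * indicator (E i) x) | (n::nat) c E.
       \<forall>i<n. E i \<in> sets M \<and> emeasure M (E i) < \<infinity>}"

definition Lb :: "'a measure \<Rightarrow> (('a \<Rightarrow> ennreal) \<Rightarrow> ennreal) \<Rightarrow> ('a \<Rightarrow> 'f::real_normed_field) set" where
  "Lb M \<rho> = {f \<in> Lrho M \<rho>. \<forall>\<epsilon>::real. \<epsilon> > 0 \<longrightarrow>
      (\<exists>s\<in>simple_span M. \<rho> (\<lambda>x. ennreal (norm (f x - s x))) < ennreal \<epsilon>)}"

definition minimal_qn :: "'a measure \<Rightarrow> (('a \<Rightarrow> ennreal) \<Rightarrow> ennreal) \<Rightarrow> 'f::real_normed_field itself \<Rightarrow> bool" where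
  "minimal_qn M \<rho> _ \<longleftrightarrow> (Lb M \<rho> :: ('a \<Rightarrow> 'f) set) = Lrho M \<rho>"

end

(* Every element x of a real normed field is a root of a real quadratic
   X^2 - 2 Re z X + |z|^2 (Ostrowski): the coercive function
   z |-> |x^2 - 2 Re z x + |z|^2| attains its minimum m, and if m > 0, lifting a
   minimiser of largest modulus slightly in the imaginary direction yields, via a
   factorisation of real polynomials into linear and quadratic factors, a minimiser
   of larger modulus.  Hence the scalar field is spanned by 1 and a square root of -1,
   and its closed balls are compact.

   If rho is locally dominating, every element of the span is dominated by a multiple
   of the indicator of a finite-measure set.  For f within e of such an s, a
   decreasing sequence below |f| splits into its part below |s|, which tends to 0 by
   domination, and an excess bounded by rho(|f - s|) <= e.  Conversely, on a
   sigma-finite space, exhaust Omega by finite-measure sets B_n on which |f| <= n: for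
   dominating |f| the tails |f| chi_(Omega - B_n) tend to 0, and on B_n the function f
   is uniformly approximated by simple functions with values in a finite net of a
   compact ball.  Indicators of finite-measure sets lie in L^b, which gives the other
   implication, and L_rho = L^d \<subseteq> L^b yields minimality. *)

theory Submission
  imports Defs "HOL-Computational_Algebra.Fundamental_Theorem_Algebra"
begin

section \<open>Closed balls of a real normed field are compact\<close>

definition of_real_poly :: "real poly \<Rightarrow> 'a::real_algebra_1 poly" where
  "of_real_poly = map_poly of_real"

lemma coeff_of_real_poly [simp]: "coeff (of_real_poly p) n = of_real (coeff p n)"
  by (simp add: of_real_poly_def coeff_map_poly)

lemma of_real_poly_0 [simp]: "of_real_poly 0 = 0"
  by (simp add: of_real_poly_def)

lemma of_real_poly_pCons [simp]: "of_real_poly (pCons a p) = pCons (of_real a) (of_real_poly p)"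
  by (simp add: of_real_poly_def map_poly_pCons)

lemma of_real_poly_mult:
  "of_real_poly (p * q) = (of_real_poly p * of_real_poly q :: 'a::{real_algebra_1,comm_ring_1} poly)"
  by (rule poly_eqI) (simp add: coeff_mult of_real_sum)

lemma of_real_poly_add:
  "of_real_poly (p + q) = (of_real_poly p + of_real_poly q :: 'a::{real_algebra_1,comm_ring_1} poly)"
  by (rule poly_eqI) simp

lemma of_real_poly_power:
  "of_real_poly (p ^ n) = (of_real_poly p ^ n :: 'a::{real_algebra_1,comm_ring_1} poly)"
  by (induction n) (simp_all add: of_real_poly_mult, simp add: of_real_poly_def)

lemma degree_of_real_poly [simp]: "degree (of_real_poly p :: 'a::real_algebra_1 poly) = degree p"
  unfolding of_real_poly_def by (rule degree_map_poly) simp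

lemma poly_of_real_poly_of_real:
  "poly (of_real_poly p) (of_real r :: 'a::{real_algebra_1,comm_ring_1}) = of_real (poly p r)"
  by (induction p) simp_all

definition conj_pair_poly :: "complex \<Rightarrow> real poly" where
  "conj_pair_poly z = [:(cmod z)^2, - 2 * Re z, 1:]"

lemma poly_conj_pair_poly:
  "poly (of_real_poly (conj_pair_poly z)) (x::'a::{real_algebra_1,comm_ring_1})
     = x * x - of_real (2 * Re z) * x + of_real ((cmod z)^2)"
  by (simp add: conj_pair_poly_def algebra_simps)

lemma conj_pair_poly_nonzero [simp]: "conj_pair_poly z \<noteq> 0"
  and degree_conj_pair_poly [simp]: "degree (conj_pair_poly z) = 2"
  and coeff_conj_pair_poly_2 [simp]: "coeff (conj_pair_poly z) 2 = 1"
  by (simp_all add: conj_pair_poly_def numeral_2_eq_2)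

lemma poly_conj_pair_poly_self: "poly (of_real_poly (conj_pair_poly z)) z = 0"
  unfolding poly_conj_pair_poly cmod_power2
  by (simp add: complex_eq_iff power2_eq_square algebra_simps)

lemma conj_pair_poly_dvd:
  assumes root: "poly (of_real_poly P) w = 0" and "Im w \<noteq> 0"
  shows "conj_pair_poly w dvd P"
proof -
  define R where "R = P mod conj_pair_poly w"
  have "degree R \<le> 1"
    using degree_mod_less[of "conj_pair_poly w" P] unfolding R_def by fastforce
  then have R_eq: "R = [:coeff R 0, coeff R 1:]"
    by (intro poly_eqI) (auto simp: coeff_pCons coeff_eq_0 split: nat.splits)
  have "P = conj_pair_poly w * (P div conj_pair_poly w) + R"
    unfolding R_def by simp
  then have "poly (of_real_poly R) w = 0"
    using root by (metis add_0 mult_zero_left of_real_poly_add poly_add poly_conj_pair_poly_self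
        of_real_poly_mult poly_mult)
  then have "of_real (coeff R 0) + of_real (coeff R 1) * w = 0"
    by (subst (asm) R_eq) (simp add: mult.commute)
  \<comment> \<open>the imaginary part forces the linear coefficient to vanish, then the real part the constant one\<close>
  then have "coeff R 1 = 0" and "coeff R 0 = 0"
    using \<open>Im w \<noteq> 0\<close> by (auto simp: complex_eq_iff)
  then have "R = 0" by (subst R_eq) simp
  then show ?thesis unfolding R_def by (simp add: mod_eq_0_iff_dvd)
qed

lemma real_poly_factor:
  assumes "0 < degree P"
  obtains r Q where "P = [:-r, 1:] * Q"
    | w Q where "P = conj_pair_poly w * Q"
proof -
  have "\<not> constant (poly (of_real_poly P :: complex poly))"
    using assms by (simp add: constant_degree)
  then obtain w :: complex where root: "poly (of_real_poly P) w = 0"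
    using fundamental_theorem_of_algebra by blast
  show thesis
  proof (cases "Im w = 0")
    case True
    then have "poly P (Re w) = 0"
      using root poly_of_real_poly_of_real[of P "Re w", where 'a=complex]
      by (simp add: complex_is_Real_iff)
    then show thesis using that(1) by (metis dvdE poly_eq_0_iff_dvd)
  next
    case False
    then show thesis using that(2) conj_pair_poly_dvd[OF root] by (metis dvdE)
  qed
qed

definition conj_pair_norm :: "'a::real_normed_field \<Rightarrow> complex \<Rightarrow> real" where
  "conj_pair_norm x z = norm (poly (of_real_poly (conj_pair_poly z)) x)"

lemma conj_pair_norm_of_real: "conj_pair_norm x (complex_of_real r) = (norm (x - of_real r))^2"
proof -
  have "poly (of_real_poly (conj_pair_poly (complex_of_real r))) x = (x - of_real r)^2"
    unfolding poly_conj_pair_poly by (simp add: power2_eq_square algebra_simps)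
  then show ?thesis unfolding conj_pair_norm_def by (simp add: norm_power)
qed

lemma monic_real_poly_lower_bound:
  fixes x :: "'a::real_normed_field"
  assumes m: "0 \<le> m" "\<And>z. m \<le> conj_pair_norm x z" and "lead_coeff P = 1"
  shows "m ^ degree P \<le> (norm (poly (of_real_poly P) x))^2"
  using \<open>lead_coeff P = 1\<close>
proof (induction "degree P" arbitrary: P rule: less_induct)
  case less
  have step: "?case" if PQ: "P = D * Q" and D: "lead_coeff D = 1" "0 < degree D"
    and mD: "m ^ degree D \<le> (norm (poly (of_real_poly D) x))^2" for D Q
  proof -
    have "D \<noteq> 0" "Q \<noteq> 0" using PQ D less.prems by auto
    then have deg: "degree P = degree D + degree Q"
      using PQ by (simp add: degree_mult_eq)
    moreover have "lead_coeff Q = 1"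
      using PQ D less.prems by (simp add: lead_coeff_mult)
    ultimately have "m ^ degree Q \<le> (norm (poly (of_real_poly Q) x))^2"
      using less.hyps D by simp
    then have "m ^ degree D * m ^ degree Q
        \<le> (norm (poly (of_real_poly D) x))^2 * (norm (poly (of_real_poly Q) x))^2"
      using mD m(1) by (intro mult_mono) auto
    then show ?thesis
      unfolding deg by (simp add: PQ of_real_poly_mult norm_mult power_add power_mult_distrib)
  qed
  show ?case
  proof (cases "degree P = 0")
    case True
    then show ?thesis using less.prems by (auto elim!: degree_eq_zeroE)
  next
    case False
    then have "0 < degree P" by simp
    then show ?thesis
    proof (cases rule: real_poly_factor)
      case (1 r Q)
      show ?thesis
        using m(2)[of r] by (intro step[OF 1]) (auto simp: conj_pair_norm_of_real)
    next
      case (2 w Q)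
      have "m\<^sup>2 \<le> (conj_pair_norm x w)\<^sup>2" using m by (intro power_mono) auto
      then show ?thesis by (intro step[OF 2]) (simp_all add: conj_pair_norm_def)
    qed
  qed
qed

lemma conj_pair_norm_perturb:
  fixes x :: "'a::real_normed_field"
  assumes m: "0 \<le> m" "\<And>z. m \<le> conj_pair_norm x z"
    and z1: "poly (of_real_poly (conj_pair_poly z0)) z1 = - of_real e" "Im z1 \<noteq> 0"
  shows "conj_pair_norm x z1 * m ^ n \<le> \<bar>e\<bar> ^ Suc n + conj_pair_norm x z0 ^ Suc n"
proof -
  define G where "G = [:- ((- e) ^ Suc n):] + conj_pair_poly z0 ^ Suc n"
  have deg_power: "degree (conj_pair_poly z0 ^ Suc n) = 2 * Suc n"
    by (subst degree_power_eq) auto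
  then have deg_G: "degree G = 2 * Suc n"
    unfolding G_def by (subst degree_add_eq_right) auto
  have lead_G: "lead_coeff G = 1"
    unfolding G_def
    by (subst lead_coeff_add_le) (use deg_power in simp, simp add: lead_coeff_power del: power_Suc)
  have "poly (of_real_poly G) z1 = 0"
    unfolding G_def using z1(1) by (simp add: of_real_poly_add of_real_poly_power del: power_Suc)
  then obtain Q where GQ: "G = conj_pair_poly z1 * Q"
    using conj_pair_poly_dvd[OF _ z1(2)] by (metis dvdE)
  then have "Q \<noteq> 0" using lead_G by auto
  then have deg_Q: "degree Q = 2 * n"
    using deg_G by (simp add: GQ degree_mult_eq)
  have "lead_coeff Q = 1"
    using lead_G unfolding GQ lead_coeff_mult by simp
  then have "m ^ degree Q \<le> (norm (poly (of_real_poly Q) x))\<^sup>2"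
    by (rule monic_real_poly_lower_bound[OF m])
  then have "(m ^ n)\<^sup>2 \<le> (norm (poly (of_real_poly Q) x))\<^sup>2"
    by (simp only: deg_Q power_even_eq)
  then have mQ: "m ^ n \<le> norm (poly (of_real_poly Q) x)"
    by (rule power2_le_imp_le) simp
  have "conj_pair_norm x z1 * m ^ n \<le> conj_pair_norm x z1 * norm (poly (of_real_poly Q) x)"
    using mQ by (simp add: conj_pair_norm_def mult_left_mono)
  also have "\<dots> = norm (poly (of_real_poly G) x)"
    by (simp add: GQ conj_pair_norm_def of_real_poly_mult norm_mult)
  also have "poly (of_real_poly G) x = of_real (- ((- e) ^ Suc n)) + poly (of_real_poly (conj_pair_poly z0)) x ^ Suc n"
    by (simp add: G_def of_real_poly_add of_real_poly_power del: power_Suc)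
  also have "norm \<dots> \<le> \<bar>e\<bar> ^ Suc n + conj_pair_norm x z0 ^ Suc n"
    by (rule order_trans[OF norm_triangle_ineq])
      (simp add: conj_pair_norm_def norm_power power_abs del: power_Suc)
  finally show ?thesis .
qed

lemma conj_pair_norm_continuous: "continuous_on A (conj_pair_norm x)"
  unfolding conj_pair_norm_def[abs_def] poly_conj_pair_poly by (intro continuous_intros)

lemma conj_pair_norm_coercive:
  assumes "3 * norm x + 1 \<le> cmod z"
  shows "conj_pair_norm x 0 < conj_pair_norm x z"
proof -
  define a where "a = x * x - of_real (2 * Re z) * x + of_real ((cmod z)^2)"
  have "(cmod z)^2 = norm (a - x * x + of_real (2 * Re z) * x)"
    by (simp add: a_def norm_power)
  also have "\<dots> \<le> norm a + norm x * norm x + 2 * cmod z * norm x"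
    using abs_Re_le_cmod[of z] norm_ge_zero[of x]
    by (smt (verit) mult_right_mono norm_mult norm_of_real norm_triangle_ineq norm_triangle_ineq4)
  finally have "(cmod z)^2 - 2 * cmod z * norm x - (norm x)^2 \<le> conj_pair_norm x z"
    by (simp add: conj_pair_norm_def poly_conj_pair_poly a_def power2_eq_square)
  moreover have "(3 * norm x + 1) * (norm x + 1) \<le> cmod z * (cmod z - 2 * norm x)"
    using assms by (intro mult_mono) auto
  moreover have "2 * (norm x)^2 < (3 * norm x + 1) * (norm x + 1)"
    by (simp add: power2_eq_square algebra_simps add_pos_nonneg)
  moreover have "conj_pair_norm x 0 = (norm x)^2"
    using conj_pair_norm_of_real[of x 0] by simp
  ultimately show ?thesis by (simp add: power2_eq_square algebra_simps)
qed

lemma conj_pair_norm_extremal_minimiser: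
  fixes x :: "'a::real_normed_field"
  obtains z0 where "\<And>z. conj_pair_norm x z0 \<le> conj_pair_norm x z"
    and "\<And>z. conj_pair_norm x z = conj_pair_norm x z0 \<Longrightarrow> cmod z \<le> cmod z0"
proof -
  define R where "R = 3 * norm x + 1"
  have far: "conj_pair_norm x 0 < conj_pair_norm x z" if "z \<notin> cball 0 R" for z
    using that conj_pair_norm_coercive[of x z] by (simp add: R_def)
  have "0 \<in> cball 0 R" by (simp add: R_def add_nonneg_pos)
  then obtain zm where zm: "\<And>z. z \<in> cball 0 R \<Longrightarrow> conj_pair_norm x zm \<le> conj_pair_norm x z"
    and zm_0: "conj_pair_norm x zm \<le> conj_pair_norm x 0"
    using continuous_attains_inf[OF compact_cball _ conj_pair_norm_continuous] by blast
  have min: "conj_pair_norm x zm \<le> conj_pair_norm x z" for z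
    using zm far[of z] zm_0 by fastforce
  define S where "S = conj_pair_norm x -` {conj_pair_norm x zm}"
  have "S \<subseteq> cball 0 R"
    using far zm_0 by (force simp: S_def)
  moreover have "closed S"
    unfolding S_def using conj_pair_norm_continuous[of UNIV x]
    by (intro continuous_closed_vimage closed_singleton) (simp add: continuous_on_eq_continuous_at)
  ultimately have "compact S"
    by (metis bounded_cball bounded_subset compact_eq_bounded_closed)
  moreover have "zm \<in> S" by (simp add: S_def)
  ultimately obtain z0 where "z0 \<in> S" and "\<And>z. z \<in> S \<Longrightarrow> cmod z \<le> cmod z0"
    using continuous_attains_sup[of S cmod] continuous_on_norm_id by blast
  then show thesis
    using min by (intro that[of z0]) (auto simp: S_def)
qed

lemma conj_pair_norm_has_zero:
  fixes x :: "'a::real_normed_field"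
  shows "\<exists>z. conj_pair_norm x z = 0"
proof -
  obtain z0 where min: "\<And>z. conj_pair_norm x z0 \<le> conj_pair_norm x z"
    and extremal: "\<And>z. conj_pair_norm x z = conj_pair_norm x z0 \<Longrightarrow> cmod z \<le> cmod z0"
    using conj_pair_norm_extremal_minimiser[of x] by blast
  define m where "m = conj_pair_norm x z0"
  show ?thesis
  proof (rule ccontr)
    assume "\<nexists>z. conj_pair_norm x z = 0"
    then have "0 < m" by (simp add: m_def conj_pair_norm_def order_le_neq_trans)
    \<comment> \<open>move z0 vertically so that |z1|^2 = |z0|^2 + m/2; the minimum is attained at z1 as well\<close>
    define z1 where "z1 = Complex (Re z0) (sqrt ((Im z0)^2 + m / 2))"
    have "0 < (Im z0)^2 + m / 2"
      using \<open>0 < m\<close> by (intro add_nonneg_pos) auto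
    then have Im_z1: "(Im z1)^2 = (Im z0)^2 + m / 2" and "Im z1 \<noteq> 0"
      by (simp_all add: z1_def)
    then have "(cmod z0)^2 < (cmod z1)^2"
      using \<open>0 < m\<close> by (simp add: cmod_power2 z1_def)
    then have far: "cmod z0 < cmod z1" by (rule power_less_imp_less_base) simp
    have z1_value: "poly (of_real_poly (conj_pair_poly z0)) z1 = - of_real (m / 2)"
      using Im_z1 unfolding poly_conj_pair_poly cmod_power2
      by (simp add: complex_eq_iff power2_eq_square algebra_simps z1_def)
    have "conj_pair_norm x z1 * m ^ n \<le> m ^ n * (m + m * (1/2) ^ Suc n)" for n
      using conj_pair_norm_perturb[OF _ min z1_value \<open>Im z1 \<noteq> 0\<close>, of n] \<open>0 < m\<close>
      by (simp add: m_def power_divide algebra_simps)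
    then have bound: "conj_pair_norm x z1 \<le> m + m * (1/2) ^ Suc n" for n
      using \<open>0 < m\<close> by (simp add: mult.commute del: power_Suc)
    have "(\<lambda>n. m + m * (1/2::real) ^ n) \<longlonglongrightarrow> m + m * 0"
      by (intro tendsto_intros) simp
    then have "(\<lambda>n. m + m * (1/2::real) ^ Suc n) \<longlonglongrightarrow> m"
      using LIMSEQ_Suc by force
    then have "conj_pair_norm x z1 \<le> m"
      using bound by (intro LIMSEQ_le_const) auto
    then show False
      using min[of z1] extremal[of z1] far by (simp add: m_def)
  qed
qed

lemma real_normed_field_quadratic_root:
  fixes v :: "'a::real_normed_field"
  obtains a b where "(v - of_real a)^2 = - of_real (b^2)" and "cmod (Complex a b) \<le> 3 * norm v + 1"
proof -
  obtain z where z: "conj_pair_norm v z = 0"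
    using conj_pair_norm_has_zero by blast
  then have "(v - of_real (Re z))^2 = - of_real ((Im z)^2)"
    unfolding conj_pair_norm_def poly_conj_pair_poly cmod_power2
    by (simp add: power2_eq_square algebra_simps)
  moreover have "cmod z \<le> 3 * norm v + 1"
    using conj_pair_norm_coercive[of v z] z
    by (cases "3 * norm v + 1 \<le> cmod z") (auto simp: conj_pair_norm_def)
  ultimately show thesis
    using that[of "Re z" "Im z"] by (simp add: complex_surj)
qed

lemma real_normed_field_complex_coordinates:
  obtains j :: "'a::real_normed_field"
  where "\<And>v. \<exists>z. v = of_real (Re z) + of_real (Im z) * j \<and> cmod z \<le> 3 * norm v + 1"
proof (cases "\<exists>(v::'a) a b. (v - of_real a)^2 = - of_real (b^2) \<and> b \<noteq> 0")
  case False
  show thesis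
  proof (rule that[of 0])
    fix v :: 'a
    obtain a b where ab: "(v - of_real a)^2 = - of_real (b^2)" "cmod (Complex a b) \<le> 3 * norm v + 1"
      by (rule real_normed_field_quadratic_root)
    with False have "b = 0" by blast
    with ab show "\<exists>z. v = of_real (Re z) + of_real (Im z) * 0 \<and> cmod z \<le> 3 * norm v + 1"
      by (intro exI[of _ "Complex a b"]) auto
  qed
next
  case True
  then obtain v0 :: 'a and a0 b0 where v0: "(v0 - of_real a0)^2 = - of_real (b0^2)" "b0 \<noteq> 0"
    by blast
  define j where "j = (v0 - of_real a0) / of_real b0"
  have j_square: "j * j = -1"
    using v0 by (simp add: j_def power2_eq_square[symmetric] power_divide)
  show thesis
  proof (rule that[of j])
    fix v :: 'a
    obtain a b where ab: "(v - of_real a)^2 = - of_real (b^2)" "cmod (Complex a b) \<le> 3 * norm v + 1"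
      by (rule real_normed_field_quadratic_root)
    have "(v - (of_real a + of_real b * j)) * (v - (of_real a + of_real (- b) * j))
        = (v - of_real a)^2 - (of_real b)^2 * (j * j)"
      by (simp add: algebra_simps power2_eq_square)
    then have "(v - (of_real a + of_real b * j)) * (v - (of_real a + of_real (- b) * j)) = 0"
      using ab(1) j_square by simp
    then have "v = of_real a + of_real b * j \<or> v = of_real a + of_real (- b) * j"
      by (simp only: mult_eq_0_iff right_minus_eq)
    moreover have "cmod (Complex a (- b)) = cmod (Complex a b)"
      by (simp add: cmod_def)
    ultimately show "\<exists>z. v = of_real (Re z) + of_real (Im z) * j \<and> cmod z \<le> 3 * norm v + 1"
      using ab(2) by (metis complex.sel)
  qed
qed

lemma compact_cball_real_normed_field: "compact (cball (0::'a::real_normed_field) R)"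
proof -
  obtain j :: 'a
    where coords: "\<And>v. \<exists>z. v = of_real (Re z) + of_real (Im z) * j \<and> cmod z \<le> 3 * norm v + 1"
    using real_normed_field_complex_coordinates by blast
  define \<phi> where "\<phi> z = of_real (Re z) + of_real (Im z) * j" for z
  have "cball 0 R \<subseteq> \<phi> ` cball 0 (3 * R + 1)"
  proof
    fix v :: 'a
    assume "v \<in> cball 0 R"
    moreover obtain z where "v = \<phi> z" "cmod z \<le> 3 * norm v + 1"
      using coords[of v] unfolding \<phi>_def by blast
    ultimately show "v \<in> \<phi> ` cball 0 (3 * R + 1)" by force
  qed
  moreover have "compact (\<phi> ` cball 0 (3 * R + 1))"
    unfolding \<phi>_def by (intro compact_continuous_image continuous_intros compact_cball)
  ultimately show ?thesis
    by (metis compact_Int_closed closed_cball inf.absorb_iff2)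
qed

lemma real_normed_field_finite_net:
  assumes "0 < \<eta>"
  obtains cs :: "'a::real_normed_field list"
  where "\<And>v. norm v \<le> R \<Longrightarrow> \<exists>i<length cs. dist (cs ! i) v < \<eta>"
proof -
  have "cball 0 R \<subseteq> (\<Union>c\<in>cball 0 R. ball c \<eta>)"
    using assms by auto
  then obtain C where "finite C" and C: "cball (0::'a) R \<subseteq> (\<Union>c\<in>C. ball c \<eta>)"
    by (rule compactE_image[OF compact_cball_real_normed_field open_ball])
  then obtain cs where cs: "set cs = C" using finite_list by blast
  show thesis
  proof (rule that)
    fix v :: 'a
    assume "norm v \<le> R"
    then have "v \<in> cball 0 R" by simp
    then have "v \<in> (\<Union>c\<in>C. ball c \<eta>)" using C by (rule subsetD[rotated])
    then obtain c where "c \<in> set cs" "dist c v < \<eta>" by (auto simp: cs)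
    then show "\<exists>i<length cs. dist (cs ! i) v < \<eta>" by (metis in_set_conv_nth)
  qed
qed

section \<open>Uniform approximation by simple functions\<close>

lemma simple_function_simple_span:
  assumes "s \<in> simple_span M"
  shows "simple_function M (s :: 'a \<Rightarrow> 'f::real_normed_field)"
proof -
  obtain n :: nat and c E where s: "s = (\<lambda>x. \<Sum>i<n. (c i :: 'f) * indicator (E i) x)"
    and E: "\<forall>i<n. E i \<in> sets M \<and> emeasure M (E i) < \<infinity>"
    using assms unfolding simple_span_def by blast
  show ?thesis
    unfolding s by (intro simple_function_sum simple_function_mult simple_function_const) (use E in auto)
qed

lemma indicator_in_simple_span:
  assumes "E \<in> sets M" "emeasure M E < \<infinity>"
  shows "(indicator E :: 'a \<Rightarrow> 'f::real_normed_field) \<in> simple_span M"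
  unfolding simple_span_def
  by (intro CollectI exI[of _ "1::nat"] exI[of _ "\<lambda>_. 1::'f"] exI[of _ "\<lambda>_. E"]) (use assms in auto)

text \<open>The scalars are not known to be second countable, so \<open>borel_measurable_diff\<close>
  does not apply.\<close>
lemma borel_measurable_diff_simple_function:
  fixes f s :: "'a \<Rightarrow> 'b::real_normed_vector"
  assumes f: "f \<in> borel_measurable M" and s: "simple_function M s"
  shows "(\<lambda>x. f x - s x) \<in> borel_measurable M"
proof (rule measurableI)
  fix B :: "'b set"
  assume B: "B \<in> sets borel"
  have diff_const: "(\<lambda>x. f x - v) \<in> borel_measurable M" for v
    using measurable_compose[OF f, of "\<lambda>y. y - v"]
    by (simp add: borel_measurable_continuous_onI continuous_on_diff continuous_on_id continuous_on_const)
  have preimage: "(\<lambda>x. f x - s x) -` B \<inter> space M =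
      (\<Union>v\<in>s ` space M. (s -` {v} \<inter> space M) \<inter> ((\<lambda>x. f x - v) -` B \<inter> space M))"
    by auto
  show "(\<lambda>x. f x - s x) -` B \<inter> space M \<in> sets M"
    unfolding preimage using simple_functionD[OF s] measurable_sets[OF diff_const B]
    by (intro sets.finite_UN) auto
qed simp

lemma ennreal_norm_indicator:
  "(\<lambda>x. ennreal (norm (indicator E x :: 'f::real_normed_algebra_1))) = indicator E"
  by (auto simp: indicator_def)

lemma borel_measurable_norm_ennreal:
  fixes f :: "'a \<Rightarrow> 'b::real_normed_vector"
  shows "f \<in> borel_measurable M \<Longrightarrow> (\<lambda>x. ennreal (norm (f x))) \<in> borel_measurable M"
  by measurable

lemma simple_span_uniform_approx:
  fixes f :: "'a \<Rightarrow> 'f::real_normed_field"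
  assumes f: "f \<in> borel_measurable M" and B: "B \<in> sets M" "emeasure M B < \<infinity>"
    and bounded: "\<And>x. x \<in> B \<Longrightarrow> norm (f x) \<le> R" and "0 < \<eta>"
  obtains s where "s \<in> simple_span M" "\<And>x. x \<in> B \<Longrightarrow> norm (f x - s x) < \<eta>"
    "\<And>x. x \<notin> B \<Longrightarrow> s x = 0"
proof -
  obtain cs :: "'f list" where net: "\<And>v. norm v \<le> R \<Longrightarrow> \<exists>i<length cs. dist (cs ! i) v < \<eta>"
    using real_normed_field_finite_net[OF \<open>0 < \<eta>\<close>] by blast
  define c where "c i = cs ! i" for i
  define D where "D i = (\<lambda>x. dist (c i) (f x)) -` {..<\<eta>} \<inter> space M" for i
  define E where "E i = B \<inter> D i - (\<Union>j<i. D j)" for i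
  define s where "s x = (\<Sum>i<length cs. c i * indicator (E i) x)" for x
  have D: "D i \<in> sets M" for i
  proof -
    have "(\<lambda>x. dist (c i) (f x)) \<in> borel_measurable M"
      using measurable_compose[OF f, of "dist (c i)"]
      by (simp add: borel_measurable_continuous_onI continuous_on_dist continuous_on_id continuous_on_const)
    then show ?thesis unfolding D_def by (rule measurable_sets) simp
  qed
  have "s \<in> simple_span M"
  proof -
    have E: "E i \<in> sets M" for i
      using B D by (auto simp: E_def)
    have "emeasure M (E i) \<le> emeasure M B" for i
      using B by (intro emeasure_mono) (auto simp: E_def)
    then have "emeasure M (E i) < \<infinity>" for i
      using B(2) by (rule le_less_trans)
    with E show ?thesis unfolding simple_span_def s_def[abs_def] by blast
  qed
  moreover have "norm (f x - s x) < \<eta>" if xB: "x \<in> B" for x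
  proof -
    obtain i where "i < length cs" "dist (c i) (f x) < \<eta>"
      using net[OF bounded[OF xB]] unfolding c_def by blast
    moreover have "x \<in> space M" using xB sets.sets_into_space[OF B(1)] by blast
    ultimately have "x \<in> D i" by (simp add: D_def)
    define i0 where "i0 = (LEAST i. x \<in> D i)"
    have "x \<in> D i0" unfolding i0_def using \<open>x \<in> D i\<close> by (rule LeastI)
    have "i0 \<le> i" unfolding i0_def using \<open>x \<in> D i\<close> by (rule Least_le)
    have not_D: "x \<notin> D j" if "j < i0" for j
      using that unfolding i0_def by (rule not_less_Least)
    have "x \<in> E j \<longleftrightarrow> j = i0" for j
      using xB \<open>x \<in> D i0\<close> not_D by (cases j i0 rule: linorder_cases) (auto simp: E_def)
    then have "s x = (\<Sum>j<length cs. if j = i0 then c j else 0)"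
      unfolding s_def by (intro sum.cong) (auto simp: indicator_def)
    also have "\<dots> = c i0" using \<open>i < length cs\<close> \<open>i0 \<le> i\<close> by simp
    finally show ?thesis using \<open>x \<in> D i0\<close> by (simp add: D_def dist_norm norm_minus_commute)
  qed
  moreover have "s x = 0" if "x \<notin> B" for x
    using that by (simp add: s_def E_def)
  ultimately show thesis by (rule that)
qed

lemma sigma_finite_bounded_exhaustion:
  fixes f :: "'a \<Rightarrow> 'b::real_normed_vector"
  assumes "sigma_finite_measure M" and f: "f \<in> borel_measurable M"
  obtains B :: "nat \<Rightarrow> 'a set" where "\<And>n. B n \<in> sets M" "\<And>n. emeasure M (B n) < \<infinity>"
    "\<And>n x. x \<in> B n \<Longrightarrow> norm (f x) \<le> n" "incseq B"
    "\<And>x. x \<in> space M \<Longrightarrow> \<exists>N. \<forall>n\<ge>N. x \<in> B n"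
proof -
  obtain A :: "nat \<Rightarrow> 'a set" where A: "range A \<subseteq> sets M" "(\<Union>i. A i) = space M"
    "\<And>i. emeasure M (A i) \<noteq> \<infinity>" "incseq A"
    using sigma_finite_measure.sigma_finite_incseq[OF assms(1)] by metis
  define B where "B n = A n \<inter> ((\<lambda>x. norm (f x)) -` {..real n} \<inter> space M)" for n
  have bounded_part: "(\<lambda>x. norm (f x)) -` {..real n} \<inter> space M \<in> sets M" for n
    using measurable_sets[OF measurable_compose[OF f borel_measurable_norm]] by (simp add: comp_def)
  have B_sets: "B n \<in> sets M" for n
    unfolding B_def using A(1) bounded_part[of n] by (intro sets.Int[of "A n"]) blast+
  have B_finite: "emeasure M (B n) < \<infinity>" for n
  proof -
    have "emeasure M (B n) \<le> emeasure M (A n)"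
      using A(1) by (intro emeasure_mono) (auto simp: B_def)
    then show ?thesis using A(3)[of n] by (simp add: less_top)
  qed
  have B_incseq: "incseq B"
    using A(4) by (auto simp: B_def incseq_def)
  have B_cover: "\<exists>N. \<forall>n\<ge>N. x \<in> B n" if "x \<in> space M" for x
  proof -
    have "x \<in> (\<Union>i. A i)" using that A(2) by simp
    then obtain i where "x \<in> A i" by blast
    have "x \<in> B n" if "i \<le> n" and "nat \<lceil>norm (f x)\<rceil> \<le> n" for n
    proof -
      have "x \<in> A n" using \<open>x \<in> A i\<close> incseqD[OF A(4) \<open>i \<le> n\<close>] by blast
      moreover have "norm (f x) \<le> real n"
        using real_nat_ceiling_ge[of "norm (f x)"] that(2) by (meson of_nat_le_iff order_trans)
      ultimately show ?thesis using \<open>x \<in> space M\<close> by (simp add: B_def)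
    qed
    then show ?thesis by (intro exI[of _ "max i (nat \<lceil>norm (f x)\<rceil>)"]) simp
  qed
  have B_norm: "norm (f x) \<le> n" if "x \<in> B n" for n x
    using that by (simp add: B_def)
  show thesis by (rule that[OF B_sets B_finite B_norm B_incseq B_cover])
qed

section \<open>Dominating functions\<close>

lemma ennreal_tendsto_zeroI:
  assumes "\<And>e. 0 < e \<Longrightarrow> eventually (\<lambda>n. f n \<le> ennreal e) F"
  shows "(f \<longlongrightarrow> (0::ennreal)) F"
proof (rule order_tendstoI)
  fix a :: ennreal
  assume "0 < a"
  then obtain b where "0 < b" "b < a" using dense by blast
  then obtain e where "0 < e" "ennreal e < a"
    by (cases b) (auto simp: top_unique)
  with assms[of e] show "eventually (\<lambda>n. f n < a) F"
    by (auto elim: eventually_mono)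
qed simp

lemma Lb_subset_Lrho: "Lb M \<rho> \<subseteq> Lrho M \<rho>"
  by (auto simp: Lb_def)

lemma dominating_funD:
  assumes "dominating_fun M \<rho> g" "\<And>n. gs n \<in> borel_measurable M"
    "\<And>n. AE x in M. gs (Suc n) x \<le> gs n x" "AE x in M. gs 0 x \<le> g x"
    "AE x in M. (\<lambda>n. gs n x) \<longlonglongrightarrow> 0"
  shows "(\<lambda>n. \<rho> (gs n)) \<longlonglongrightarrow> 0"
  using assms unfolding dominating_fun_def by blast

lemma AE_decseq_le_0:
  assumes "\<And>n. AE x in M. gs (Suc n) x \<le> (gs n x :: 'b::preorder)"
  shows "AE x in M. gs n x \<le> gs 0 x"
proof -
  have "AE x in M. \<forall>n. gs (Suc n) x \<le> gs n x" using assms by (simp add: AE_all_countable)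
  then show ?thesis
    by eventually_elim (auto intro: lift_Suc_antimono_le[of "\<lambda>n. gs n _"])
qed

lemma tendsto_rho_tails:
  assumes g: "dominating_fun M \<rho> g" and B: "\<And>n. B n \<in> sets M" "incseq B"
    and cover: "\<And>x. x \<in> space M \<Longrightarrow> \<exists>N. \<forall>n\<ge>N. x \<in> B n"
  shows "(\<lambda>n. \<rho> (\<lambda>x. g x * indicator (space M - B n) x)) \<longlonglongrightarrow> 0"
proof (rule dominating_funD[OF g])
  show "(\<lambda>x. g x * indicator (space M - B n) x) \<in> borel_measurable M" for n
    using g B(1) by (intro borel_measurable_times_ennreal borel_measurable_indicator)
      (auto simp: dominating_fun_def)
  show "AE x in M. g x * indicator (space M - B (Suc n)) x \<le> g x * indicator (space M - B n) x" for n
    using B(2) by (intro AE_I2) (auto simp: incseq_Suc_iff indicator_def)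
  show "AE x in M. (\<lambda>n. g x * indicator (space M - B n) x) \<longlonglongrightarrow> 0"
  proof (rule AE_I2)
    fix x
    assume "x \<in> space M"
    then obtain N where "\<forall>n\<ge>N. x \<in> B n" using cover by blast
    then have "eventually (\<lambda>n. g x * indicator (space M - B n) x = 0) sequentially"
      unfolding eventually_sequentially by (intro exI[of _ N]) simp
    then show "(\<lambda>n. g x * indicator (space M - B n) x) \<longlonglongrightarrow> 0" by (rule tendsto_eventually)
  qed
qed (simp add: indicator_def)

locale function_quasi_norm_space =
  fixes M :: "'a measure" and \<rho> :: "('a \<Rightarrow> ennreal) \<Rightarrow> ennreal" and \<kappa> :: real
  assumes rho_scale: "f \<in> borel_measurable M \<Longrightarrow> 0 \<le> t \<Longrightarrow>
      \<rho> (\<lambda>x. ennreal t * f x) = ennreal t * \<rho> f"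
    and rho_mono: "f \<in> borel_measurable M \<Longrightarrow> g \<in> borel_measurable M \<Longrightarrow>
      (AE x in M. f x \<le> g x) \<Longrightarrow> \<rho> f \<le> \<rho> g"
    and rho_indicator_finite: "E \<in> sets M \<Longrightarrow> emeasure M E < \<infinity> \<Longrightarrow> \<rho> (indicator E) < \<infinity>"
    and rho_quasi_triangle: "f \<in> borel_measurable M \<Longrightarrow> g \<in> borel_measurable M \<Longrightarrow>
      \<rho> (\<lambda>x. f x + g x) \<le> ennreal \<kappa> * (\<rho> f + \<rho> g)"
    and kappa_pos: "0 < \<kappa>"

lemma function_quasi_norm_space_exists:
  assumes "function_quasi_norm M \<rho>"
  obtains \<kappa> where "function_quasi_norm_space M \<rho> \<kappa>"
proof -
  note F = assms[unfolded function_quasi_norm_def]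
  obtain k :: real where k: "\<forall>f\<in>borel_measurable M. \<forall>g\<in>borel_measurable M.
      \<rho> (\<lambda>x. f x + g x) \<le> ennreal k * (\<rho> f + \<rho> g)"
    using conjunct2[OF conjunct2[OF conjunct2[OF conjunct2[OF F]]]] by blast
  have "function_quasi_norm_space M \<rho> (max k 1)"
  proof
    show "\<rho> (\<lambda>x. ennreal t * f x) = ennreal t * \<rho> f" if "f \<in> borel_measurable M" "0 \<le> t" for f t
      using conjunct1[OF F] that by blast
    show "\<rho> f \<le> \<rho> g" if "f \<in> borel_measurable M" "g \<in> borel_measurable M"
      "AE x in M. f x \<le> g x" for f g
      using conjunct1[OF conjunct2[OF F]] that by blast
    show "\<rho> (indicator E) < \<infinity>" if "E \<in> sets M" "emeasure M E < \<infinity>" for E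
      using conjunct1[OF conjunct2[OF conjunct2[OF F]]] that by blast
    show "\<rho> (\<lambda>x. f x + g x) \<le> ennreal (max k 1) * (\<rho> f + \<rho> g)"
      if "f \<in> borel_measurable M" "g \<in> borel_measurable M" for f g
      using k that order_trans[OF _ mult_right_mono[of "ennreal k" "ennreal (max k 1)"]] by simp
  qed simp
  then show thesis by (rule that)
qed

context function_quasi_norm_space
begin

lemma rho_zero: "\<rho> (\<lambda>x. 0) = 0"
  using rho_scale[of "\<lambda>x. 0" 0] by simp

lemma kappa_double: "0 \<le> a \<Longrightarrow> ennreal \<kappa> * (ennreal a + ennreal a) = ennreal (2 * \<kappa> * a)"
  using kappa_pos by (simp flip: ennreal_plus ennreal_mult)

lemma rho_le_min_plus_diff:
  assumes "f \<in> borel_measurable M" "g \<in> borel_measurable M"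
  shows "\<rho> f \<le> ennreal \<kappa> * (\<rho> (\<lambda>x. min (f x) (g x)) + \<rho> (\<lambda>x. f x - g x))"
proof -
  have "f x \<le> min (f x) (g x) + (f x - g x)" for x
    by (cases "f x \<le> g x") (simp_all add: add_diff_inverse_ennreal)
  then have "\<rho> f \<le> \<rho> (\<lambda>x. min (f x) (g x) + (f x - g x))"
    using assms by (intro rho_mono) auto
  also have "\<dots> \<le> ennreal \<kappa> * (\<rho> (\<lambda>x. min (f x) (g x)) + \<rho> (\<lambda>x. f x - g x))"
    using assms by (intro rho_quasi_triangle) auto
  finally show ?thesis .
qed

lemma dominating_fun_mono:
  assumes g: "dominating_fun M \<rho> g" and h: "h \<in> borel_measurable M" and le: "AE x in M. h x \<le> g x"
  shows "dominating_fun M \<rho> h"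
proof -
  have "\<rho> h \<le> \<rho> g" using g h le by (intro rho_mono) (auto simp: dominating_fun_def)
  then have "\<rho> h < \<infinity>" using g by (auto simp: dominating_fun_def)
  moreover have "AE x in M. gs 0 x \<le> g x" if "AE x in M. gs 0 x \<le> h x" for gs :: "nat \<Rightarrow> 'a \<Rightarrow> ennreal"
    using that le by eventually_elim (rule order_trans)
  ultimately show ?thesis
    using g h unfolding dominating_fun_def by blast
qed

lemma dominating_fun_cmult:
  assumes g: "dominating_fun M \<rho> g" and "0 < c"
  shows "dominating_fun M \<rho> (\<lambda>x. ennreal c * g x)"
proof -
  have g_meas: "g \<in> borel_measurable M" and "\<rho> g < \<infinity>"
    using g by (auto simp: dominating_fun_def)
  then have "\<rho> (\<lambda>x. ennreal c * g x) < \<infinity>"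
    using \<open>0 < c\<close> by (simp add: rho_scale ennreal_mult_less_top)
  moreover have "(\<lambda>n. \<rho> (gs n)) \<longlonglongrightarrow> 0"
    if gs: "\<forall>n. gs n \<in> borel_measurable M" "\<forall>n. AE x in M. gs (Suc n) x \<le> gs n x"
       "AE x in M. gs 0 x \<le> ennreal c * g x" "AE x in M. (\<lambda>n. gs n x) \<longlonglongrightarrow> 0" for gs
  proof -
    define hs where "hs n x = ennreal (1 / c) * gs n x" for n x
    have inverse: "ennreal c * ennreal (1 / c) = 1"
      using \<open>0 < c\<close> by (simp flip: ennreal_mult)
    have gs_eq: "gs n = (\<lambda>x. ennreal c * hs n x)" for n
      by (simp add: hs_def mult.assoc[symmetric] inverse)
    have hs_meas: "hs n \<in> borel_measurable M" for n
      using gs(1) unfolding hs_def[abs_def] by (auto intro: borel_measurable_times_ennreal)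
    have "(\<lambda>n. \<rho> (hs n)) \<longlonglongrightarrow> 0"
    proof (rule dominating_funD[OF g hs_meas])
      show "AE x in M. hs (Suc n) x \<le> hs n x" for n
        using gs(2)[rule_format, of n] unfolding hs_def by eventually_elim (rule mult_left_mono, auto)
      show "AE x in M. hs 0 x \<le> g x"
        using gs(3)
      proof eventually_elim
        case (elim x)
        then have "hs 0 x \<le> ennreal (1 / c) * (ennreal c * g x)"
          unfolding hs_def by (rule mult_left_mono) simp
        also have "\<dots> = g x" by (simp add: mult.assoc[symmetric] mult.commute[of "ennreal (1 / c)"] inverse)
        finally show ?case .
      qed
      show "AE x in M. (\<lambda>n. hs n x) \<longlonglongrightarrow> 0"
        using gs(4) unfolding hs_def by eventually_elim (use ennreal_tendsto_cmult in force)
    qed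
    then have "(\<lambda>n. ennreal c * \<rho> (hs n)) \<longlonglongrightarrow> 0"
      using ennreal_tendsto_cmult[of "ennreal c"] by force
    moreover have "\<rho> (gs n) = ennreal c * \<rho> (hs n)" for n
      using rho_scale[OF hs_meas, of c] \<open>0 < c\<close> by (simp add: gs_eq)
    ultimately show ?thesis by simp
  qed
  ultimately show ?thesis
    using g_meas unfolding dominating_fun_def by auto
qed

lemma dominating_fun_simple_span:
  assumes loc: "locally_dominating M \<rho>" and s: "s \<in> simple_span M"
  shows "dominating_fun M \<rho> (\<lambda>x. ennreal (norm (s x :: 'f::real_normed_field)))"
proof -
  obtain n :: nat and c E where s_eq: "s = (\<lambda>x. \<Sum>i<n. (c i :: 'f) * indicator (E i) x)"
    and E: "\<forall>i<n. E i \<in> sets M \<and> emeasure M (E i) < \<infinity>"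
    using s unfolding simple_span_def by blast
  \<comment> \<open>s is dominated by a multiple of the indicator of the union U of the sets E i\<close>
  define U where "U = (\<Union>i<n. E i)"
  define C where "C = (\<Sum>i<n. norm (c i)) + 1"
  have U_sets: "U \<in> sets M" using E by (auto simp: U_def)
  have "emeasure M U \<le> (\<Sum>i<n. emeasure M (E i))"
    unfolding U_def using E by (intro emeasure_subadditive_finite) auto
  also have "\<dots> < \<infinity>"
    using E by simp
  finally have "emeasure M U < \<infinity>" .
  then have dom: "dominating_fun M \<rho> (\<lambda>x. ennreal C * indicator U x)"
    using loc U_sets unfolding locally_dominating_def
    by (intro dominating_fun_cmult) (auto simp: C_def add_nonneg_pos sum_nonneg)
  have s_le: "norm (s x) \<le> C * indicator U x" for x
  proof -
    have "norm (s x) \<le> (\<Sum>i<n. norm (c i * indicator (E i) x))"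
      unfolding s_eq by (rule norm_sum)
    also have "\<dots> = (\<Sum>i<n. norm (c i) * indicator (E i) x)"
      by (intro sum.cong) (auto simp: indicator_def)
    also have "\<dots> \<le> (\<Sum>i<n. norm (c i)) * indicator U x"
      unfolding sum_distrib_right U_def
      by (intro sum_mono mult_left_mono) (auto simp: indicator_def)
    also have "\<dots> \<le> C * indicator U x"
      by (simp add: C_def indicator_def)
    finally show ?thesis .
  qed
  have "ennreal (norm (s x)) \<le> ennreal C * indicator U x" for x
    using s_le[of x] by (cases "x \<in> U") (auto intro: ennreal_leI)
  moreover have "(\<lambda>x. ennreal (norm (s x))) \<in> borel_measurable M"
    using s by (intro borel_measurable_norm_ennreal borel_measurable_simple_function
        simple_function_simple_span)
  ultimately show ?thesis
    by (intro dominating_fun_mono[OF dom]) auto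
qed

lemma tendsto_rho_min_dominating:
  assumes g: "dominating_fun M \<rho> g" and gs: "\<And>n. gs n \<in> borel_measurable M"
    "\<And>n. AE x in M. gs (Suc n) x \<le> gs n x" "AE x in M. (\<lambda>n. gs n x) \<longlonglongrightarrow> 0"
  shows "(\<lambda>n. \<rho> (\<lambda>x. min (gs n x) (g x))) \<longlonglongrightarrow> 0"
proof (rule dominating_funD[OF g])
  show "(\<lambda>x. min (gs n x) (g x)) \<in> borel_measurable M" for n
    using gs(1) g by (auto simp: dominating_fun_def)
  show "AE x in M. min (gs (Suc n) x) (g x) \<le> min (gs n x) (g x)" for n
    using gs(2)[of n] by eventually_elim (rule min.mono, auto)
  show "AE x in M. (\<lambda>n. min (gs n x) (g x)) \<longlonglongrightarrow> 0"
    using gs(3) by eventually_elim (rule tendsto_sandwich[of "\<lambda>n. 0" _ _ "\<lambda>n. gs n _"], auto)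
qed simp

lemma eventually_rho_le_dominated_plus:
  assumes g: "dominating_fun M \<rho> g" "\<And>x. g x < \<infinity>"
    and h: "h \<in> borel_measurable M" "\<rho> h < ennreal e"
    and gs: "\<And>n. gs n \<in> borel_measurable M" "\<And>n. AE x in M. gs (Suc n) x \<le> gs n x"
      "AE x in M. gs 0 x \<le> g x + h x" "AE x in M. (\<lambda>n. gs n x) \<longlonglongrightarrow> 0"
  shows "eventually (\<lambda>n. \<rho> (gs n) \<le> ennreal \<kappa> * (ennreal e + ennreal e)) sequentially"
proof -
  \<comment> \<open>split gs n into its part below the dominating g, which vanishes, and the excess over g\<close>
  have g_meas: "g \<in> borel_measurable M" using g(1) by (simp add: dominating_fun_def)
  have excess: "\<rho> (\<lambda>x. gs n x - g x) \<le> ennreal e" for n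
  proof -
    have "AE x in M. gs n x \<le> gs 0 x"
      by (rule AE_decseq_le_0) (rule gs(2))
    then have "AE x in M. gs n x - g x \<le> h x"
      using gs(3)
    proof eventually_elim
      case (elim x)
      then show ?case
        using g(2)[of x] order_trans[OF elim] by (auto simp: ennreal_minus_le_iff)
    qed
    then have "\<rho> (\<lambda>x. gs n x - g x) \<le> \<rho> h"
      using gs(1) g_meas h(1) by (intro rho_mono) (auto intro: borel_measurable_minus_ennreal)
    then show ?thesis using h(2) by simp
  qed
  have "0 < ennreal e" by (rule le_less_trans[OF zero_le h(2)])
  with tendsto_rho_min_dominating[OF g(1) gs(1,2,4)]
  have "eventually (\<lambda>n. \<rho> (\<lambda>x. min (gs n x) (g x)) < ennreal e) sequentially"
    by (rule order_tendstoD(2))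
  then show ?thesis
  proof eventually_elim
    case (elim n)
    have "\<rho> (gs n) \<le> ennreal \<kappa> * (\<rho> (\<lambda>x. min (gs n x) (g x)) + \<rho> (\<lambda>x. gs n x - g x))"
      using gs(1) g_meas by (intro rho_le_min_plus_diff) auto
    also have "\<dots> \<le> ennreal \<kappa> * (ennreal e + ennreal e)"
      using elim excess[of n] by (intro mult_left_mono add_mono) auto
    finally show ?case .
  qed
qed

lemma Lb_subset_Ld:
  assumes loc: "locally_dominating M \<rho>"
  shows "(Lb M \<rho> :: ('a \<Rightarrow> 'f::real_normed_field) set) \<subseteq> Ld M \<rho>"
proof
  fix f :: "'a \<Rightarrow> 'f"
  assume f: "f \<in> Lb M \<rho>"
  then have "f \<in> Lrho M \<rho>" and f_meas: "f \<in> borel_measurable M"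
    by (auto simp: Lb_def Lrho_def)
  have "(\<lambda>n. \<rho> (gs n)) \<longlonglongrightarrow> 0"
    if gs: "\<forall>n. gs n \<in> borel_measurable M" "\<forall>n. AE x in M. gs (Suc n) x \<le> gs n x"
      "AE x in M. gs 0 x \<le> ennreal (norm (f x))" "AE x in M. (\<lambda>n. gs n x) \<longlonglongrightarrow> 0" for gs
  proof (rule ennreal_tendsto_zeroI)
    fix \<epsilon> :: real
    assume "0 < \<epsilon>"
    define e where "e = \<epsilon> / (2 * \<kappa>)"
    have "0 < e" using \<open>0 < \<epsilon>\<close> kappa_pos by (simp add: e_def)
    then obtain s where s: "s \<in> simple_span M" "\<rho> (\<lambda>x. ennreal (norm (f x - s x))) < ennreal e"
      using f by (auto simp: Lb_def)
    have "AE x in M. gs 0 x \<le> ennreal (norm (s x)) + ennreal (norm (f x - s x))"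
      using gs(3)
    proof eventually_elim
      case (elim x)
      have "norm (f x) \<le> norm (s x) + norm (f x - s x)"
        using norm_triangle_ineq[of "s x" "f x - s x"] by simp
      then show ?case
        using elim by (auto simp flip: ennreal_plus intro: order_trans ennreal_leI)
    qed
    moreover have "(\<lambda>x. ennreal (norm (f x - s x))) \<in> borel_measurable M"
      by (intro borel_measurable_norm_ennreal borel_measurable_diff_simple_function f_meas
          simple_function_simple_span s(1))
    ultimately have "eventually (\<lambda>n. \<rho> (gs n) \<le> ennreal \<kappa> * (ennreal e + ennreal e)) sequentially"
      using eventually_rho_le_dominated_plus[OF dominating_fun_simple_span[OF loc s(1)] _ _ s(2)] gs
      by simp
    then show "eventually (\<lambda>n. \<rho> (gs n) \<le> ennreal \<epsilon>) sequentially"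
      using \<open>0 < e\<close> kappa_pos by (simp add: kappa_double e_def)
  qed
  then have "dominating_fun M \<rho> (\<lambda>x. ennreal (norm (f x)))"
    using \<open>f \<in> Lrho M \<rho>\<close> f_meas
    unfolding dominating_fun_def Lrho_def by (auto intro: borel_measurable_norm_ennreal)
  with \<open>f \<in> Lrho M \<rho>\<close> show "f \<in> Ld M \<rho>" by (simp add: Ld_def)
qed

lemma simple_span_approx_outside_tail:
  fixes f :: "'a \<Rightarrow> 'f::real_normed_field"
  assumes f_meas: "f \<in> borel_measurable M" and B: "B \<in> sets M" "emeasure M B < \<infinity>"
    and bounded: "\<And>x. x \<in> B \<Longrightarrow> norm (f x) \<le> R" and "0 < d"
  obtains s where "s \<in> simple_span M"
    "\<rho> (\<lambda>x. ennreal (norm (f x - s x)))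
       \<le> ennreal \<kappa> * (\<rho> (\<lambda>x. ennreal (norm (f x)) * indicator (space M - B) x) + ennreal d)"
proof -
  define tail where "tail x = ennreal (norm (f x)) * indicator (space M - B) x" for x
  have tail_meas: "tail \<in> borel_measurable M"
    unfolding tail_def[abs_def] using f_meas B
    by (intro borel_measurable_times_ennreal borel_measurable_norm_ennreal borel_measurable_indicator) auto
  define r where "r = enn2real (\<rho> (indicator B))"
  have r: "\<rho> (indicator B) = ennreal r" "0 \<le> r"
    using rho_indicator_finite[OF B] by (simp_all add: r_def less_top)
  \<comment> \<open>approximate f on B uniformly within eta, chosen so that eta * rho (indicator B) \<le> d\<close>
  define \<eta> where "\<eta> = d / (r + 1)"
  have "0 < \<eta>" using \<open>0 < d\<close> r(2) by (simp add: \<eta>_def)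
  have "\<eta> * r \<le> d" using \<open>0 < d\<close> r(2) by (simp add: \<eta>_def field_simps)
  obtain s where s: "s \<in> simple_span M" "\<And>x. x \<in> B \<Longrightarrow> norm (f x - s x) < \<eta>"
    "\<And>x. x \<notin> B \<Longrightarrow> s x = 0"
    using simple_span_uniform_approx[OF f_meas B bounded \<open>0 < \<eta>\<close>] by blast
  have indicator_meas: "(\<lambda>x. ennreal \<eta> * indicator B x) \<in> borel_measurable M"
    using B by (intro borel_measurable_times_ennreal borel_measurable_indicator) auto
  have "ennreal (norm (f x - s x)) \<le> tail x + ennreal \<eta> * indicator B x" if "x \<in> space M" for x
    using s(2,3)[of x] that by (cases "x \<in> B") (auto simp: tail_def intro: ennreal_leI)
  then have "\<rho> (\<lambda>x. ennreal (norm (f x - s x))) \<le> \<rho> (\<lambda>x. tail x + ennreal \<eta> * indicator B x)"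
    using tail_meas indicator_meas
    by (intro rho_mono AE_I2 borel_measurable_norm_ennreal borel_measurable_diff_simple_function
        f_meas simple_function_simple_span s(1)) auto
  also have "\<dots> \<le> ennreal \<kappa> * (\<rho> tail + ennreal \<eta> * \<rho> (indicator B))"
    using rho_quasi_triangle[OF tail_meas indicator_meas] rho_scale[of "indicator B" \<eta>]
      B \<open>0 < \<eta>\<close> by simp
  also have "\<dots> \<le> ennreal \<kappa> * (\<rho> tail + ennreal d)"
    using \<open>\<eta> * r \<le> d\<close> r \<open>0 < \<eta>\<close>
    by (intro mult_left_mono add_mono) (auto simp flip: ennreal_mult intro: ennreal_leI)
  finally show thesis
    using s(1) that unfolding tail_def by blast
qed

lemma Ld_subset_Lb:
  assumes "sigma_finite_measure M"
  shows "(Ld M \<rho> :: ('a \<Rightarrow> 'f::real_normed_field) set) \<subseteq> Lb M \<rho>"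
proof
  fix f :: "'a \<Rightarrow> 'f"
  assume "f \<in> Ld M \<rho>"
  then have "f \<in> Lrho M \<rho>" and f_dom: "dominating_fun M \<rho> (\<lambda>x. ennreal (norm (f x)))"
    and f_meas: "f \<in> borel_measurable M"
    by (auto simp: Ld_def Lrho_def)
  obtain B :: "nat \<Rightarrow> 'a set"
    where B_sets: "\<And>n. B n \<in> sets M" and B_finite: "\<And>n. emeasure M (B n) < \<infinity>"
    and B_bounded: "\<And>n x. x \<in> B n \<Longrightarrow> norm (f x) \<le> n" and "incseq B"
    and B_cover: "\<And>x. x \<in> space M \<Longrightarrow> \<exists>N. \<forall>n\<ge>N. x \<in> B n"
    using sigma_finite_bounded_exhaustion[OF assms f_meas] by blast
  have tails: "(\<lambda>n. \<rho> (\<lambda>x. ennreal (norm (f x)) * indicator (space M - B n) x)) \<longlonglongrightarrow> 0"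
    by (rule tendsto_rho_tails[OF f_dom B_sets \<open>incseq B\<close> B_cover])
  have "\<exists>s\<in>simple_span M. \<rho> (\<lambda>x. ennreal (norm (f x - s x))) < ennreal \<epsilon>" if "0 < \<epsilon>" for \<epsilon>
  proof -
    define d where "d = \<epsilon> / (4 * \<kappa>)"
    have "0 < d" using \<open>0 < \<epsilon>\<close> kappa_pos by (simp add: d_def)
    obtain N where N: "\<rho> (\<lambda>x. ennreal (norm (f x)) * indicator (space M - B N) x) < ennreal d"
      using order_tendstoD(2)[OF tails, of "ennreal d"] \<open>0 < d\<close>
      by (auto simp: eventually_sequentially)
    obtain s where "s \<in> simple_span M" and
      "\<rho> (\<lambda>x. ennreal (norm (f x - s x)))
         \<le> ennreal \<kappa> * (\<rho> (\<lambda>x. ennreal (norm (f x)) * indicator (space M - B N) x) + ennreal d)"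
      using simple_span_approx_outside_tail[OF f_meas B_sets B_finite B_bounded \<open>0 < d\<close>] by blast
    note this(2)
    also have "ennreal \<kappa> * (\<rho> (\<lambda>x. ennreal (norm (f x)) * indicator (space M - B N) x) + ennreal d)
        \<le> ennreal \<kappa> * (ennreal d + ennreal d)"
      using N by (intro mult_left_mono add_mono) auto
    also have "\<dots> < ennreal \<epsilon>"
      using \<open>0 < d\<close> \<open>0 < \<epsilon>\<close> kappa_pos by (simp add: kappa_double d_def ennreal_lessI)
    finally show ?thesis using \<open>s \<in> simple_span M\<close> by blast
  qed
  then show "f \<in> Lb M \<rho>"
    using \<open>f \<in> Lrho M \<rho>\<close> by (simp add: Lb_def)
qed

lemma indicator_in_Lb:
  assumes "E \<in> sets M" "emeasure M E < \<infinity>"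
  shows "(indicator E :: 'a \<Rightarrow> 'f::real_normed_field) \<in> Lb M \<rho>"
  unfolding Lb_def
proof (intro CollectI conjI allI impI)
  show "(indicator E :: 'a \<Rightarrow> 'f) \<in> Lrho M \<rho>"
    using assms rho_indicator_finite[OF assms] by (simp add: Lrho_def ennreal_norm_indicator)
  show "\<exists>s\<in>simple_span M. \<rho> (\<lambda>x. ennreal (norm (indicator E x - s x))) < ennreal \<epsilon>"
    if "0 < \<epsilon>" for \<epsilon>
    using indicator_in_simple_span[OF assms] that by (intro bexI[of _ "indicator E"]) (simp_all add: rho_zero)
qed

lemma locally_dominating_iff_Ld_eq_Lb:
  assumes "sigma_finite_measure M"
  shows "locally_dominating M \<rho> \<longleftrightarrow> (Ld M \<rho> :: ('a \<Rightarrow> 'f::real_normed_field) set) = Lb M \<rho>"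
proof
  assume "locally_dominating M \<rho>"
  then show "(Ld M \<rho> :: ('a \<Rightarrow> 'f) set) = Lb M \<rho>"
    using Lb_subset_Ld Ld_subset_Lb[OF assms] by blast
next
  assume eq: "(Ld M \<rho> :: ('a \<Rightarrow> 'f) set) = Lb M \<rho>"
  show "locally_dominating M \<rho>"
    unfolding locally_dominating_def
  proof (intro ballI impI)
    fix E
    assume "E \<in> sets M" "emeasure M E < \<infinity>"
    then have "(indicator E :: 'a \<Rightarrow> 'f) \<in> Ld M \<rho>"
      using indicator_in_Lb eq by blast
    then show "dominating_fun M \<rho> (indicator E)"
      by (simp add: Ld_def ennreal_norm_indicator)
  qed
qed

end

theorem corollary3p29:
  fixes M :: "'a measure" and \<rho> :: "('a \<Rightarrow> ennreal) \<Rightarrow> ennreal"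
  assumes "sigma_finite_measure M" and "function_quasi_norm M \<rho>"
  shows "(locally_dominating M \<rho> \<longleftrightarrow>
            (Ld M \<rho> :: ('a \<Rightarrow> 'f::real_normed_field) set) = Lb M \<rho>)
       \<and> (dominating_qn M \<rho> TYPE('f) \<longrightarrow> minimal_qn M \<rho> TYPE('f))"
proof -
  obtain \<kappa> where "function_quasi_norm_space M \<rho> \<kappa>"
    using function_quasi_norm_space_exists[OF assms(2)] by blast
  then interpret function_quasi_norm_space M \<rho> \<kappa> .
  have "(Lrho M \<rho> :: ('a \<Rightarrow> 'f) set) = Lb M \<rho>" if "(Lrho M \<rho> :: ('a \<Rightarrow> 'f) set) = Ld M \<rho>"
  proof (rule subset_antisym)
    show "(Lrho M \<rho> :: ('a \<Rightarrow> 'f) set) \<subseteq> Lb M \<rho>"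
      using that Ld_subset_Lb[OF assms(1)] by simp
  qed (rule Lb_subset_Lrho)
  then show ?thesis
    using locally_dominating_iff_Ld_eq_Lb[OF assms(1)]
    by (auto simp: dominating_qn_def minimal_qn_def)
qed

end
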